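(* For every integer $n\ge3$, if $T$ is a uniformly random standard Young tableau of shape $(n,n,n)$, then $$\Pr(T_{1,3}=7)=\frac{5n(n+1)^2(n+2)}{9(3n-1)(3n-2)(3n-4)(3n-5)}.$$
   Context: A standard Young tableau of shape $(n,n,n)$ is a bijective filling $T$ of the cells $[a,b]$ ($1\le a\le 3$, $1\le b\le n$; row $a$, column $b$) by $\{1,\dots,3n\}$ that increases along each row and down each column. $T_{a,b}$ denotes the entry in cell $[a,b]$. *)

theory Defs
  imports "HOL-Probability.Probability"
begin

text \<open>Cells of the shape (n,n,n): row a in 1..3, column b in 1..n.\<close>
definition cells :: "nat \<Rightarrow> (nat \<times> nat) set" where
  "cells n = {1..3} \<times> {1..n}"

text \<open>Standard Young tableaux of shape (n,n,n), as functions on cells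
  (extended by 0 outside the cells, so that the set is finite).\<close>
definition syt :: "nat \<Rightarrow> (nat \<times> nat \<Rightarrow> nat) set" where
  "syt n = {T. bij_betw T (cells n) {1..3*n}
     \<and> (\<forall>c. c \<notin> cells n \<longrightarrow> T c = 0)
     \<and> (\<forall>a b b'. (a,b) \<in> cells n \<and> (a,b') \<in> cells n \<and> b < b' \<longrightarrow> T (a,b) < T (a,b'))
     \<and> (\<forall>a a' b. (a,b) \<in> cells n \<and> (a',b) \<in> cells n \<and> a < a' \<longrightarrow> T (a,b) < T (a',b))}"

end

theory Submission imports Defs begin

text \<open>Since \<open>(1, 3)\<close> is the least cell outside the first two columns, \<open>T\<^sub>1\<^sub>,\<^sub>3 = 7\<close>
  holds exactly when the first two columns carry the entries \<open>1..6\<close>. Such tableaux are therefore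
  pairs of a tableau of the \<open>3 \<times> 2\<close> rectangle (there are 5) and a translated tableau of the
  \<open>3 \<times> (n - 2)\<close> rectangle. Tableaux of a three-row shape are counted by removing the cell of the
  largest entry, which must be a corner; Frobenius' formula satisfies the same recursion, so the
  \<open>3 \<times> k\<close> rectangle has \<open>2 (3k)! / ((k + 2)! (k + 1)! k!)\<close> tableaux, and the probability is
  the quotient of these counts for \<open>n - 2\<close> and \<open>n\<close>, times 5.\<close>

section \<open>Standard fillings of arbitrary cell sets\<close>

definition syt_on :: "(nat \<times> nat) set \<Rightarrow> nat \<Rightarrow> (nat \<times> nat \<Rightarrow> nat) set" where
  "syt_on S N = {T. bij_betw T S {1..N}
     \<and> (\<forall>c. c \<notin> S \<longrightarrow> T c = 0)
     \<and> (\<forall>a b b'. (a,b) \<in> S \<and> (a,b') \<in> S \<and> b < b' \<longrightarrow> T (a,b) < T (a,b'))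
     \<and> (\<forall>a a' b. (a,b) \<in> S \<and> (a',b) \<in> S \<and> a < a' \<longrightarrow> T (a,b) < T (a',b))}"

lemma syt_eq_syt_on: "syt n = syt_on (cells n) (3 * n)"
  unfolding syt_def syt_on_def by simp

lemma syt_onI:
  assumes "inj_on T S" "T ` S = {1..N}" "\<And>x. x \<notin> S \<Longrightarrow> T x = 0"
    and "\<And>a b b'. (a,b) \<in> S \<Longrightarrow> (a,b') \<in> S \<Longrightarrow> b < b' \<Longrightarrow> T (a,b) < T (a,b')"
    and "\<And>a a' b. (a,b) \<in> S \<Longrightarrow> (a',b) \<in> S \<Longrightarrow> a < a' \<Longrightarrow> T (a,b) < T (a',b)"
  shows "T \<in> syt_on S N"
  using assms unfolding syt_on_def bij_betw_def by blast

lemma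
  assumes "T \<in> syt_on S N"
  shows syt_on_inj_on: "inj_on T S"
    and syt_on_image: "T ` S = {1..N}"
    and syt_on_outside: "x \<notin> S \<Longrightarrow> T x = 0"
    and syt_on_row_less: "(a,b) \<in> S \<Longrightarrow> (a,b') \<in> S \<Longrightarrow> b < b' \<Longrightarrow> T (a,b) < T (a,b')"
    and syt_on_col_less: "(a,b) \<in> S \<Longrightarrow> (a',b) \<in> S \<Longrightarrow> a < a' \<Longrightarrow> T (a,b) < T (a',b)"
  using assms unfolding syt_on_def bij_betw_def by blast+

lemma syt_on_range: "T \<in> syt_on S N \<Longrightarrow> x \<in> S \<Longrightarrow> T x \<in> {1..N}"
  using syt_on_image by blast

lemma finite_syt_on:
  assumes "finite S"
  shows "finite (syt_on S N)"
proof -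
  have "syt_on S N \<subseteq> (\<lambda>f x. if x \<in> S then f x else 0) ` (S \<rightarrow>\<^sub>E {..N})"
  proof
    fix T assume T: "T \<in> syt_on S N"
    have "T = (\<lambda>x. if x \<in> S then restrict T S x else 0)"
      using syt_on_outside[OF T] by auto
    moreover have "restrict T S \<in> S \<rightarrow>\<^sub>E {..N}"
      using syt_on_range[OF T] by auto
    ultimately show "T \<in> (\<lambda>f x. if x \<in> S then f x else 0) ` (S \<rightarrow>\<^sub>E {..N})" by blast
  qed
  then show ?thesis
    using assms by (meson finite_PiE finite_atMost finite_imageI finite_subset)
qed

definition rowcol_before :: "(nat \<times> nat) set \<Rightarrow> (nat \<times> nat) set \<Rightarrow> bool" where
  "rowcol_before U V \<longleftrightarrow>
     (\<forall>u\<in>U. \<forall>v\<in>V. (fst u = fst v \<longrightarrow> snd u < snd v) \<and> (snd u = snd v \<longrightarrow> fst u < fst v))"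

definition fill_restrict :: "(nat \<times> nat) set \<Rightarrow> (nat \<times> nat \<Rightarrow> nat) \<Rightarrow> nat \<times> nat \<Rightarrow> nat" where
  "fill_restrict U T x = (if x \<in> U then T x else 0)"

definition fill_shift_down :: "(nat \<times> nat) set \<Rightarrow> nat \<Rightarrow> (nat \<times> nat \<Rightarrow> nat) \<Rightarrow> nat \<times> nat \<Rightarrow> nat" where
  "fill_shift_down V k T x = (if x \<in> V then T x - k else 0)"

definition fill_glue ::
    "(nat \<times> nat) set \<Rightarrow> (nat \<times> nat) set \<Rightarrow> nat \<Rightarrow> (nat \<times> nat \<Rightarrow> nat) \<Rightarrow> (nat \<times> nat \<Rightarrow> nat) \<Rightarrow> nat \<times> nat \<Rightarrow> nat" where
  "fill_glue U V k A B x = (if x \<in> U then A x else if x \<in> V then B x + k else 0)"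

lemma syt_on_restrict:
  assumes T: "T \<in> syt_on (U \<union> V) N" and TU: "T ` U = {1..k}"
  shows "fill_restrict U T \<in> syt_on U k"
proof (rule syt_onI)
  have "inj_on T U" using syt_on_inj_on[OF T] by (rule inj_on_subset) simp
  then show "inj_on (fill_restrict U T) U" by (simp add: inj_on_def fill_restrict_def)
  have "fill_restrict U T ` U = T ` U" by (rule image_cong) (simp_all add: fill_restrict_def)
  then show "fill_restrict U T ` U = {1..k}" using TU by simp
qed (use syt_on_row_less[OF T] syt_on_col_less[OF T] in \<open>simp_all add: fill_restrict_def\<close>)

lemma syt_on_image_upper:
  assumes T: "T \<in> syt_on (U \<union> V) (k + M)" and UV: "U \<inter> V = {}" and TU: "T ` U = {1..k}"
  shows "T ` V = (\<lambda>v. v + k) ` {1..M}"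
proof -
  have "T ` V = T ` (U \<union> V) - T ` U"
    using inj_on_image_set_diff[OF syt_on_inj_on[OF T], of "U \<union> V" U] UV
    by (simp add: Un_Diff Int_commute Diff_triv)
  then show ?thesis
    using syt_on_image[OF T] TU by auto
qed

lemma syt_on_upper_gt:
  assumes "T \<in> syt_on (U \<union> V) (k + M)" "U \<inter> V = {}" "T ` U = {1..k}" "x \<in> V"
  shows "k < T x"
proof -
  have "T x \<in> (\<lambda>v. v + k) ` {1..M}" using syt_on_image_upper[OF assms(1-3)] assms(4) by blast
  then show ?thesis by auto
qed

lemma syt_on_shift_down:
  assumes T: "T \<in> syt_on (U \<union> V) (k + M)" and UV: "U \<inter> V = {}" and TU: "T ` U = {1..k}"
  shows "fill_shift_down V k T \<in> syt_on V M"
proof (rule syt_onI)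
  note big = syt_on_upper_gt[OF T UV TU]
  show "inj_on (fill_shift_down V k T) V"
  proof (rule inj_onI)
    fix x y assume xy: "x \<in> V" "y \<in> V" "fill_shift_down V k T x = fill_shift_down V k T y"
    then have "T x = T y" using big[OF xy(1)] big[OF xy(2)] by (simp add: fill_shift_down_def)
    then show "x = y" using inj_onD[OF syt_on_inj_on[OF T]] xy(1,2) by blast
  qed
  have "fill_shift_down V k T ` V = (\<lambda>v. v - k) ` T ` V"
    unfolding image_image by (rule image_cong) (simp_all add: fill_shift_down_def)
  then show "fill_shift_down V k T ` V = {1..M}"
    unfolding syt_on_image_upper[OF T UV TU] image_image by simp
  show "fill_shift_down V k T (a,b) < fill_shift_down V k T (a,b')" if "(a,b) \<in> V" "(a,b') \<in> V" "b < b'" for a b b'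
    using that syt_on_row_less[OF T, of a b b'] big[of "(a,b)"] by (simp add: fill_shift_down_def)
  show "fill_shift_down V k T (a,b) < fill_shift_down V k T (a',b)" if "(a,b) \<in> V" "(a',b) \<in> V" "a < a'" for a a' b
    using that syt_on_col_less[OF T, of a b a'] big[of "(a,b)"] by (simp add: fill_shift_down_def)
qed (simp add: fill_shift_down_def)

lemma
  assumes "U \<inter> V = {}"
  shows fill_glue_on_U: "x \<in> U \<Longrightarrow> fill_glue U V k A B x = A x"
    and fill_glue_on_V: "x \<in> V \<Longrightarrow> fill_glue U V k A B x = B x + k"
  using assms unfolding fill_glue_def by auto

lemma syt_on_glue:
  assumes A: "A \<in> syt_on U k" and B: "B \<in> syt_on V M"
    and UV: "U \<inter> V = {}" and before: "rowcol_before U V"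
  shows "fill_glue U V k A B \<in> syt_on (U \<union> V) (k + M)"
proof (rule syt_onI)
  let ?G = "fill_glue U V k A B"
  note on_U = fill_glue_on_U[OF UV] and on_V = fill_glue_on_V[OF UV]
  have "?G ` U = A ` U" by (rule image_cong) (simp_all add: on_U)
  then have GU: "?G ` U = {1..k}" using syt_on_image[OF A] by simp
  have "?G ` V = (\<lambda>v. v + k) ` B ` V" unfolding image_image by (rule image_cong) (simp_all add: on_V)
  then have GV: "?G ` V = {k+1..k+M}" using syt_on_image[OF B] by (simp add: add.commute)
  show "?G ` (U \<union> V) = {1..k+M}" unfolding image_Un GU GV by auto
  have small: "?G x \<le> k" if "x \<in> U" for x
    using imageI[OF that, of ?G] unfolding GU by simp
  have large: "k < ?G y" if "y \<in> V" for y
    using imageI[OF that, of ?G] unfolding GV by simp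
  have "inj_on ?G U" using inj_on_cong[of U ?G A] on_U syt_on_inj_on[OF A] by blast
  moreover have "inj_on ?G V"
  proof (rule inj_onI)
    fix x y assume "x \<in> V" "y \<in> V" "?G x = ?G y"
    then show "x = y" using on_V inj_onD[OF syt_on_inj_on[OF B]] by simp
  qed
  moreover have "?G ` U \<inter> ?G ` V = {}" unfolding GU GV by auto
  moreover have "U - V = U" "V - U = V" using UV by auto
  ultimately show "inj_on ?G (U \<union> V)" by (simp only: inj_on_Un)
  show "?G x = 0" if "x \<notin> U \<union> V" for x using that by (simp add: fill_glue_def)
  have less: "?G u < ?G v"
    if uv: "u \<in> U \<union> V" "v \<in> U \<union> V" "\<not> (u \<in> V \<and> v \<in> U)"
      and A_less: "u \<in> U \<Longrightarrow> v \<in> U \<Longrightarrow> A u < A v"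
      and B_less: "u \<in> V \<Longrightarrow> v \<in> V \<Longrightarrow> B u < B v" for u v
  proof -
    consider "u \<in> U" "v \<in> U" | "u \<in> V" "v \<in> V" | "u \<in> U" "v \<in> V" using uv by blast
    then show ?thesis
    proof cases
      case 1 then show ?thesis using A_less on_U by simp
    next
      case 2 then show ?thesis using B_less on_V by simp
    next
      case 3 then show ?thesis using small large le_less_trans by blast
    qed
  qed
  show "?G (a,b) < ?G (a,b')" if "(a,b) \<in> U \<union> V" "(a,b') \<in> U \<union> V" "b < b'" for a b b'
  proof (rule less[OF that(1,2)])
    show "\<not> ((a,b) \<in> V \<and> (a,b') \<in> U)" using before that(3) unfolding rowcol_before_def by fastforce
  qed (use syt_on_row_less[OF A] syt_on_row_less[OF B] that(3) in blast)+
  show "?G (a,b) < ?G (a',b)" if "(a,b) \<in> U \<union> V" "(a',b) \<in> U \<union> V" "a < a'" for a a' b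
  proof (rule less[OF that(1,2)])
    show "\<not> ((a,b) \<in> V \<and> (a',b) \<in> U)" using before that(3) unfolding rowcol_before_def by fastforce
  qed (use syt_on_col_less[OF A] syt_on_col_less[OF B] that(3) in blast)+
qed

lemma card_syt_on_split:
  assumes UV: "U \<inter> V = {}" and before: "rowcol_before U V"
  shows "card {T \<in> syt_on (U \<union> V) (k + M). T ` U = {1..k}} = card (syt_on U k) * card (syt_on V M)"
proof -
  let ?S = "{T \<in> syt_on (U \<union> V) (k + M). T ` U = {1..k}}"
  have "bij_betw (\<lambda>T. (fill_restrict U T, fill_shift_down V k T)) ?S (syt_on U k \<times> syt_on V M)"
  proof (rule bij_betw_byWitness[where f'="\<lambda>(A, B). fill_glue U V k A B"])
    show "\<forall>T\<in>?S. (\<lambda>(A, B). fill_glue U V k A B) (fill_restrict U T, fill_shift_down V k T) = T"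
    proof (intro ballI ext)
      fix T x assume "T \<in> ?S"
      then have T: "T \<in> syt_on (U \<union> V) (k + M)" and TU: "T ` U = {1..k}" by simp_all
      consider "x \<in> U" | "x \<in> V" | "x \<notin> U \<union> V" by blast
      then show "(\<lambda>(A, B). fill_glue U V k A B) (fill_restrict U T, fill_shift_down V k T) x = T x"
      proof cases
        case 2
        then have "x \<notin> U" "k < T x" using UV syt_on_upper_gt[OF T UV TU] by auto
        with 2 show ?thesis by (simp add: fill_glue_def fill_restrict_def fill_shift_down_def)
      qed (simp_all add: fill_glue_def fill_restrict_def fill_shift_down_def syt_on_outside[OF T])
    qed
    show "\<forall>AB\<in>syt_on U k \<times> syt_on V M. (\<lambda>T. (fill_restrict U T, fill_shift_down V k T))
        ((\<lambda>(A, B). fill_glue U V k A B) AB) = AB"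
    proof
      fix AB assume "AB \<in> syt_on U k \<times> syt_on V M"
      then obtain A B where AB: "AB = (A, B)" and A: "A \<in> syt_on U k" and B: "B \<in> syt_on V M"
        by blast
      have "fill_restrict U (fill_glue U V k A B) = A"
      proof
        fix x show "fill_restrict U (fill_glue U V k A B) x = A x"
          by (cases "x \<in> U") (simp_all add: fill_restrict_def fill_glue_on_U[OF UV] syt_on_outside[OF A])
      qed
      moreover have "fill_shift_down V k (fill_glue U V k A B) = B"
      proof
        fix x show "fill_shift_down V k (fill_glue U V k A B) x = B x"
          by (cases "x \<in> V") (simp_all add: fill_shift_down_def fill_glue_on_V[OF UV] syt_on_outside[OF B])
      qed
      ultimately show "(\<lambda>T. (fill_restrict U T, fill_shift_down V k T)) ((\<lambda>(A, B). fill_glue U V k A B) AB) = AB"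
        unfolding AB by simp
    qed
    show "(\<lambda>T. (fill_restrict U T, fill_shift_down V k T)) ` ?S \<subseteq> syt_on U k \<times> syt_on V M"
    proof (rule image_subsetI)
      fix T assume "T \<in> ?S"
      then have T: "T \<in> syt_on (U \<union> V) (k + M)" and TU: "T ` U = {1..k}" by simp_all
      show "(fill_restrict U T, fill_shift_down V k T) \<in> syt_on U k \<times> syt_on V M"
        using syt_on_restrict[OF T TU] syt_on_shift_down[OF T UV TU] by simp
    qed
    show "(\<lambda>(A, B). fill_glue U V k A B) ` (syt_on U k \<times> syt_on V M) \<subseteq> ?S"
    proof clarify
      fix A B assume A: "A \<in> syt_on U k" and B: "B \<in> syt_on V M"
      have "fill_glue U V k A B ` U = A ` U" by (rule image_cong) (simp_all add: fill_glue_on_U[OF UV])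
      then show "fill_glue U V k A B \<in> syt_on (U \<union> V) (k + M) \<and> fill_glue U V k A B ` U = {1..k}"
        using syt_on_glue[OF A B UV before] syt_on_image[OF A] by simp
    qed
  qed
  then show ?thesis
    by (simp add: bij_betw_same_card card_cartesian_product)
qed

lemma syt_on_singleton: "syt_on {x} 1 = {(\<lambda>_. 0::nat)(x := 1)}"
proof (intro equalityI subsetI)
  fix T assume T: "T \<in> syt_on {x} 1"
  have "T x = 1" using syt_on_image[OF T] by simp
  moreover have "T y = 0" if "y \<noteq> x" for y using syt_on_outside[OF T] that by simp
  ultimately have "T = (\<lambda>_. 0)(x := 1)" by (simp add: fun_eq_iff)
  then show "T \<in> {(\<lambda>_. 0)(x := 1)}" by simp
next
  fix T :: "nat \<times> nat \<Rightarrow> nat" assume "T \<in> {(\<lambda>_. 0)(x := 1)}"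
  then have T: "T = (\<lambda>_. 0)(x := 1)" by simp
  show "T \<in> syt_on {x} 1"
    by (rule syt_onI) (simp_all add: T, (metis less_irrefl prod.inject)+)
qed

lemma syt_on_eq_max_iff:
  assumes T: "T \<in> syt_on S N" and x: "x \<in> S"
  shows "T x = N \<longleftrightarrow> T ` (S - {x}) = {1..N - 1}"
proof -
  have img: "T ` (S - {x}) = {1..N} - {T x}"
    using inj_on_image_set_diff[OF syt_on_inj_on[OF T], of S "{x}"] x syt_on_image[OF T] by simp
  have range: "T x \<in> {1..N}" using syt_on_range[OF T x] .
  show ?thesis
  proof
    assume "T x = N"
    then show "T ` (S - {x}) = {1..N - 1}" unfolding img by auto
  next
    assume rest: "T ` (S - {x}) = {1..N - 1}"
    show "T x = N"
    proof (rule ccontr)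
      assume "T x \<noteq> N"
      then have "N \<in> T ` (S - {x})" unfolding img using range by simp
      then show False unfolding rest by auto
    qed
  qed
qed

lemma syt_on_max_corner:
  assumes T: "T \<in> syt_on S N" and x: "x \<in> S" "T x = N"
  shows "rowcol_before (S - {x}) {x}"
  unfolding rowcol_before_def
proof (intro ballI conjI impI)
  fix u v assume u: "u \<in> S - {x}" and v: "v \<in> {x}"
  obtain a b where ab: "u = (a, b)" by (cases u)
  obtain a' b' where ab': "x = (a', b')" by (cases x)
  have "T u \<noteq> N" using inj_onD[OF syt_on_inj_on[OF T], of u x] u x by auto
  then have Tu: "T u < N" using syt_on_range[OF T, of u] u by simp
  show "snd u < snd v" if "fst u = fst v"
  proof (rule ccontr)
    assume "\<not> snd u < snd v"
    then have "b' < b" using that u v ab ab' by auto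
    then have "T x < T u" using syt_on_row_less[OF T, of a' b' b] u x that v ab ab' by simp
    then show False using Tu x by simp
  qed
  show "fst u < fst v" if "snd u = snd v"
  proof (rule ccontr)
    assume "\<not> fst u < fst v"
    then have "a' < a" using that u v ab ab' by auto
    then have "T x < T u" using syt_on_col_less[OF T, of a' b' a] u x that v ab ab' by simp
    then show False using Tu x by simp
  qed
qed

lemma card_syt_on_max_at:
  assumes x: "x \<in> S" and N: "1 \<le> N"
  shows "card {T \<in> syt_on S N. T x = N}
       = (if rowcol_before (S - {x}) {x} then card (syt_on (S - {x}) (N - 1)) else 0)"
proof (cases "rowcol_before (S - {x}) {x}")
  case True
  have S: "(S - {x}) \<union> {x} = S" and N': "(N - 1) + 1 = N" using x N by auto
  have "{T \<in> syt_on S N. T x = N} = {T \<in> syt_on S N. T ` (S - {x}) = {1..N - 1}}"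
    using syt_on_eq_max_iff[OF _ x] by (intro Collect_cong conj_cong refl)
  also have "\<dots> = {T \<in> syt_on ((S - {x}) \<union> {x}) ((N - 1) + 1). T ` (S - {x}) = {1..N - 1}}"
    by (simp only: S N')
  also have "card \<dots> = card (syt_on (S - {x}) (N - 1)) * card (syt_on {x} 1)"
    by (rule card_syt_on_split) (use True in auto)
  moreover have "card (syt_on {x} 1) = 1" unfolding syt_on_singleton by simp
  ultimately show ?thesis using True by simp
next
  case False
  have "T x \<noteq> N" if "T \<in> syt_on S N" for T
    using syt_on_max_corner[OF that x] False by blast
  then have empty: "{T \<in> syt_on S N. T x = N} = {}" by blast
  show ?thesis unfolding empty using False by simp
qed

lemma card_syt_on_max_outside:
  assumes x: "x \<notin> S" and N: "1 \<le> N"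
  shows "card {T \<in> syt_on S N. T x = N} = 0"
proof -
  have "T x \<noteq> N" if "T \<in> syt_on S N" for T using syt_on_outside[OF that x] N by auto
  then have "{T \<in> syt_on S N. T x = N} = {}" by blast
  then show ?thesis by (simp only: card.empty)
qed

lemma card_syt_on_sum_max:
  assumes S: "finite S" and N: "1 \<le> N"
  shows "card (syt_on S N) = (\<Sum>x\<in>S. card {T \<in> syt_on S N. T x = N})"
proof -
  have "syt_on S N = (\<Union>x\<in>S. {T \<in> syt_on S N. T x = N})"
  proof (intro equalityI subsetI)
    fix T assume T: "T \<in> syt_on S N"
    then have "N \<in> T ` S" using syt_on_image[OF T] N by simp
    then show "T \<in> (\<Union>x\<in>S. {T \<in> syt_on S N. T x = N})" using T by auto
  qed auto
  also have "card \<dots> = (\<Sum>x\<in>S. card {T \<in> syt_on S N. T x = N})"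
  proof (rule card_UN_disjoint[OF S])
    show "\<forall>x\<in>S. finite {T \<in> syt_on S N. T x = N}" using finite_syt_on[OF S] by simp
    show "\<forall>x\<in>S. \<forall>y\<in>S. x \<noteq> y \<longrightarrow> {T \<in> syt_on S N. T x = N} \<inter> {T \<in> syt_on S N. T y = N} = {}"
    proof (intro ballI impI equals0I)
      fix x y T assume "x \<in> S" "y \<in> S" "x \<noteq> y"
        and "T \<in> {T \<in> syt_on S N. T x = N} \<inter> {T \<in> syt_on S N. T y = N}"
      then show False using inj_onD[OF syt_on_inj_on, of T S N x y] by auto
    qed
  qed
  finally show ?thesis .
qed

lemma mem_shift_cols_iff:
  fixes S :: "(nat \<times> nat) set"
  shows "(a, b) \<in> (\<lambda>(i, j). (i, j + p)) ` S \<longleftrightarrow> p \<le> b \<and> (a, b - p) \<in> S"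
proof
  assume "(a, b) \<in> (\<lambda>(i, j). (i, j + p)) ` S"
  then obtain j where "(a, j) \<in> S" "b = j + p" by auto
  then show "p \<le> b \<and> (a, b - p) \<in> S" by simp
next
  assume "p \<le> b \<and> (a, b - p) \<in> S"
  then have "(a, b) = (\<lambda>(i, j). (i, j + p)) (a, b - p)" "(a, b - p) \<in> S" by simp_all
  then show "(a, b) \<in> (\<lambda>(i, j). (i, j + p)) ` S" by (rule image_eqI)
qed

lemma card_syt_on_shift_cols: "card (syt_on ((\<lambda>(i, j). (i, j + p)) ` S) N) = card (syt_on S N)"
proof -
  let ?h = "\<lambda>(i::nat, j). (i, j + p)"
  let ?back = "\<lambda>T (i, j). if p \<le> j then T (i, j - p) else 0::nat"
  have inj_h: "inj_on ?h X" for X by (auto simp: inj_on_def)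
  have back_h: "?back T \<circ> ?h = T" for T by (auto simp: fun_eq_iff)
  have "bij_betw (\<lambda>T. T \<circ> ?h) (syt_on (?h ` S) N) (syt_on S N)"
  proof (rule bij_betw_byWitness[where f'="?back"])
    show "\<forall>T\<in>syt_on (?h ` S) N. ?back (T \<circ> ?h) = T"
    proof (intro ballI ext)
      fix T and x :: "nat \<times> nat" assume T: "T \<in> syt_on (?h ` S) N"
      obtain a b where x: "x = (a, b)" by (cases x)
      show "?back (T \<circ> ?h) x = T x"
        using syt_on_outside[OF T, of x] unfolding x mem_shift_cols_iff by auto
    qed
    show "\<forall>T\<in>syt_on S N. ?back T \<circ> ?h = T" using back_h by blast
    show "(\<lambda>T. T \<circ> ?h) ` syt_on (?h ` S) N \<subseteq> syt_on S N"
    proof (rule image_subsetI, rule syt_onI)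
      fix T assume T: "T \<in> syt_on (?h ` S) N"
      show "inj_on (T \<circ> ?h) S" using inj_h syt_on_inj_on[OF T] by (rule comp_inj_on)
      show "(T \<circ> ?h) ` S = {1..N}" using syt_on_image[OF T] by (simp add: image_comp)
      show "(T \<circ> ?h) x = 0" if "x \<notin> S" for x
      proof -
        have "?h x \<notin> ?h ` S" using that inj_image_mem_iff[OF inj_h[of UNIV]] by blast
        then show ?thesis using syt_on_outside[OF T] by simp
      qed
      show "(T \<circ> ?h) (a, b) < (T \<circ> ?h) (a, b')" if "(a, b) \<in> S" "(a, b') \<in> S" "b < b'" for a b b'
        using syt_on_row_less[OF T, of a "b + p" "b' + p"] that by (simp add: mem_shift_cols_iff)
      show "(T \<circ> ?h) (a, b) < (T \<circ> ?h) (a', b)" if "(a, b) \<in> S" "(a', b) \<in> S" "a < a'" for a a' b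
        using syt_on_col_less[OF T, of a "b + p" a'] that by (simp add: mem_shift_cols_iff)
    qed
    show "?back ` syt_on S N \<subseteq> syt_on (?h ` S) N"
    proof (rule image_subsetI, rule syt_onI)
      fix T assume T: "T \<in> syt_on S N"
      show "inj_on (?back T) (?h ` S)"
        using syt_on_inj_on[OF T] back_h[of T] by (intro inj_on_imageI) simp
      show "?back T ` ?h ` S = {1..N}"
        using syt_on_image[OF T] back_h[of T] by (simp add: image_comp)
      show "?back T x = 0" if "x \<notin> ?h ` S" for x
        using syt_on_outside[OF T] that by (cases x) (auto simp: mem_shift_cols_iff)
      show "?back T (a, b) < ?back T (a, b')" if "(a, b) \<in> ?h ` S" "(a, b') \<in> ?h ` S" "b < b'" for a b b'
      proof -
        have "p \<le> b" "b - p < b' - p" using that by (auto simp: mem_shift_cols_iff)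
        then show ?thesis using syt_on_row_less[OF T, of a "b - p" "b' - p"] that
          by (simp add: mem_shift_cols_iff)
      qed
      show "?back T (a, b) < ?back T (a', b)" if "(a, b) \<in> ?h ` S" "(a', b) \<in> ?h ` S" "a < a'" for a a' b
        using syt_on_col_less[OF T, of a "b - p" a'] that by (simp add: mem_shift_cols_iff)
    qed
  qed
  then show ?thesis by (rule bij_betw_same_card)
qed

section \<open>Three-row shapes\<close>

definition shape3 :: "nat \<Rightarrow> nat \<Rightarrow> nat \<Rightarrow> (nat \<times> nat) set" where
  "shape3 a b c = {(i, j). 1 \<le> j \<and> (i = 1 \<and> j \<le> a \<or> i = 2 \<and> j \<le> b \<or> i = 3 \<and> j \<le> c)}"

definition count_syt3 :: "nat \<Rightarrow> nat \<Rightarrow> nat \<Rightarrow> nat" where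
  "count_syt3 a b c = card (syt_on (shape3 a b c) (a + b + c))"

lemma finite_shape3: "finite (shape3 a b c)"
proof (rule finite_subset)
  show "shape3 a b c \<subseteq> {1..3} \<times> {1..a + b + c}" unfolding shape3_def by auto
qed simp

lemma shape3_corner_iff:
  assumes "c \<le> b" "b \<le> a" "(i, j) \<in> shape3 a b c"
  shows "rowcol_before (shape3 a b c - {(i, j)}) {(i, j)}
     \<longleftrightarrow> (i, j + 1) \<notin> shape3 a b c \<and> (i + 1, j) \<notin> shape3 a b c"
proof
  assume corner: "rowcol_before (shape3 a b c - {(i, j)}) {(i, j)}"
  have "(i, j + 1) \<notin> shape3 a b c - {(i, j)}" using corner by (force simp: rowcol_before_def)
  moreover have "(i + 1, j) \<notin> shape3 a b c - {(i, j)}" using corner by (force simp: rowcol_before_def)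
  ultimately show "(i, j + 1) \<notin> shape3 a b c \<and> (i + 1, j) \<notin> shape3 a b c" by simp
next
  assume "(i, j + 1) \<notin> shape3 a b c \<and> (i + 1, j) \<notin> shape3 a b c"
  then show "rowcol_before (shape3 a b c - {(i, j)}) {(i, j)}"
    using assms unfolding rowcol_before_def shape3_def by auto
qed

lemma shape3_remove_corner:
  assumes "c \<le> b" "b \<le> a"
  shows "b < a \<Longrightarrow> shape3 a b c - {(1, a)} = shape3 (a - 1) b c"
    and "0 < b \<Longrightarrow> shape3 a b c - {(2, b)} = shape3 a (b - 1) c"
    and "0 < c \<Longrightarrow> shape3 a b c - {(3, c)} = shape3 a b (c - 1)"
  using assms unfolding shape3_def by auto

lemma count_syt3_sum_corners:
  assumes cb: "c \<le> b" and ba: "b \<le> a" and a: "0 < a"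
  shows "count_syt3 a b c = card {T \<in> syt_on (shape3 a b c) (a + b + c). T (1, a) = a + b + c}
                          + card {T \<in> syt_on (shape3 a b c) (a + b + c). T (2, b) = a + b + c}
                          + card {T \<in> syt_on (shape3 a b c) (a + b + c). T (3, c) = a + b + c}"
proof -
  let ?S = "shape3 a b c" and ?N = "a + b + c"
  let ?f = "\<lambda>x. card {T \<in> syt_on ?S ?N. T x = ?N}"
  let ?C = "{(1, a), (2, b), (3, c)}"
  have N: "1 \<le> ?N" using a by simp
  have inner: "?f x = 0" if "x \<in> ?S - ?C" for x
  proof -
    obtain i j where x: "x = (i, j)" by (cases x)
    have "(i, j + 1) \<in> ?S" using that unfolding x shape3_def by auto
    then show ?thesis
      using that card_syt_on_max_at[of x ?S ?N] shape3_corner_iff[OF cb ba, of i j] N x by simp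
  qed
  have "count_syt3 a b c = (\<Sum>x\<in>?S. ?f x)"
    unfolding count_syt3_def using card_syt_on_sum_max[OF finite_shape3 N] .
  also have "\<dots> = (\<Sum>x\<in>?S \<union> ?C. ?f x)"
    by (rule sum.mono_neutral_left) (use finite_shape3 card_syt_on_max_outside[OF _ N] in auto)
  also have "\<dots> = (\<Sum>x\<in>?C. ?f x)"
    by (rule sum.mono_neutral_right) (use finite_shape3 inner in auto)
  also have "\<dots> = ?f (1, a) + ?f (2, b) + ?f (3, c)" by simp
  finally show ?thesis .
qed

lemma count_syt3_rec:
  assumes cb: "c \<le> b" and ba: "b \<le> a" and a: "0 < a"
  shows "count_syt3 a b c = (if b < a then count_syt3 (a - 1) b c else 0)
                          + (if c < b then count_syt3 a (b - 1) c else 0)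
                          + (if 0 < c then count_syt3 a b (c - 1) else 0)"
proof -
  let ?S = "shape3 a b c" and ?N = "a + b + c"
  let ?f = "\<lambda>x. card {T \<in> syt_on ?S ?N. T x = ?N}"
  have N: "1 \<le> ?N" using a by simp
  have at_corner: "?f x = (if P then count_syt3 a' b' c' else 0)"
    if "x \<in> ?S" and "rowcol_before (?S - {x}) {x} \<longleftrightarrow> P"
      and "P \<Longrightarrow> ?S - {x} = shape3 a' b' c'" and "a' + b' + c' = ?N - 1" for x P a' b' c'
    using card_syt_on_max_at[OF that(1) N] that(2-4) by (simp add: count_syt3_def)
  have "?f (1, a) = (if b < a then count_syt3 (a - 1) b c else 0)"
  proof (rule at_corner)
    show "(1, a) \<in> ?S" using a by (simp add: shape3_def)
    moreover have "(1, a + 1) \<notin> ?S \<and> (1 + 1, a) \<notin> ?S \<longleftrightarrow> b < a" using a ba by (auto simp: shape3_def)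
    ultimately show "rowcol_before (?S - {(1, a)}) {(1, a)} \<longleftrightarrow> b < a"
      by (simp only: shape3_corner_iff[OF cb ba])
  qed (use a shape3_remove_corner(1)[OF cb ba] in simp_all)
  moreover have "?f (2, b) = (if c < b then count_syt3 a (b - 1) c else 0)"
  proof (cases "0 < b")
    case True
    show ?thesis
    proof (rule at_corner)
      show "(2, b) \<in> ?S" using True ba by (simp add: shape3_def)
      moreover have "(2, b + 1) \<notin> ?S \<and> (2 + 1, b) \<notin> ?S \<longleftrightarrow> c < b" using True cb by (auto simp: shape3_def)
      ultimately show "rowcol_before (?S - {(2, b)}) {(2, b)} \<longleftrightarrow> c < b"
        by (simp only: shape3_corner_iff[OF cb ba])
    qed (use True shape3_remove_corner(2)[OF cb ba] in simp_all)
  qed (use cb card_syt_on_max_outside[OF _ N] in \<open>simp add: shape3_def\<close>)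
  moreover have "?f (3, c) = (if 0 < c then count_syt3 a b (c - 1) else 0)"
  proof (cases "0 < c")
    case True
    show ?thesis
    proof (rule at_corner)
      show "(3, c) \<in> ?S" using True cb ba by (simp add: shape3_def)
      moreover have "(3, c + 1) \<notin> ?S \<and> (3 + 1, c) \<notin> ?S \<longleftrightarrow> 0 < c" using True by (auto simp: shape3_def)
      ultimately show "rowcol_before (?S - {(3, c)}) {(3, c)} \<longleftrightarrow> 0 < c"
        by (simp only: shape3_corner_iff[OF cb ba])
    qed (use True shape3_remove_corner(3)[OF cb ba] in simp_all)
  qed (use card_syt_on_max_outside[OF _ N] in \<open>simp add: shape3_def\<close>)
  ultimately show ?thesis using count_syt3_sum_corners[OF cb ba a] by simp
qed

definition delta3 :: "real \<Rightarrow> real \<Rightarrow> real \<Rightarrow> real" where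
  "delta3 x y z = (x - y) * (x - z) * (y - z)"

lemma delta3_rec:
  "(x + y + z - 3) * delta3 x y z = x * delta3 (x - 1) y z + y * delta3 x (y - 1) z + z * delta3 x y (z - 1)"
  unfolding delta3_def by (simp add: algebra_simps)

text \<open>Frobenius' formula \<open>n! \<Delta>(\<ell>) / (\<ell>\<^sub>1! \<ell>\<^sub>2! \<ell>\<^sub>3!)\<close> for the shape \<open>(a, b, c)\<close>, where
  \<open>n = a + b + c\<close>, \<open>\<ell> = (a + 2, b + 1, c)\<close> and \<open>\<Delta>\<close> is the Vandermonde product.\<close>

definition frobenius3 :: "nat \<Rightarrow> nat \<Rightarrow> nat \<Rightarrow> real" where
  "frobenius3 a b c = fact (a + b + c) * delta3 (real a + 2) (real b + 1) (real c)
                      / (fact (a + 2) * fact (b + 1) * fact c)"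

text \<open>The terms for non-removable corners vanish because a factor of \<open>\<Delta>\<close> does.\<close>

lemma frobenius3_rec:
  assumes cb: "c \<le> b" and ba: "b \<le> a" and a: "0 < a"
  shows "frobenius3 a b c = (if b < a then frobenius3 (a - 1) b c else 0)
                          + (if c < b then frobenius3 a (b - 1) c else 0)
                          + (if 0 < c then frobenius3 a b (c - 1) else 0)"
proof -
  define H :: real where "H = fact (a + 2) * fact (b + 1) * fact c"
  define K where "K = a + b + c - 1"
  have N: "a + b + c = Suc K" using a by (simp add: K_def)
  have term_a: "(if b < a then frobenius3 (a - 1) b c else 0)
      = (real a + 2) * (fact K * delta3 (real a + 1) (real b + 1) (real c)) / H"
  proof (cases "b < a")
    case True
    have "H = (real a + 2) * (fact (a - 1 + 2) * fact (b + 1) * fact c)"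
      using a by (simp add: H_def fact_Suc numeral_2_eq_2 algebra_simps)
    moreover have "frobenius3 (a - 1) b c
        = fact K * delta3 (real a + 1) (real b + 1) (real c) / (fact (a - 1 + 2) * fact (b + 1) * fact c)"
    proof -
      have "a - 1 + b + c = K" "real (a - 1) + 2 = real a + 1" using a by (simp_all add: K_def of_nat_diff)
      then show ?thesis unfolding frobenius3_def by (simp only:)
    qed
    ultimately show ?thesis using True by simp
  qed (use ba in \<open>simp add: delta3_def\<close>)
  have term_b: "(if c < b then frobenius3 a (b - 1) c else 0)
      = (real b + 1) * (fact K * delta3 (real a + 2) (real b) (real c)) / H"
  proof (cases "c < b")
    case True
    have "H = (real b + 1) * (fact (a + 2) * fact (b - 1 + 1) * fact c)"
      using True by (simp add: H_def fact_Suc algebra_simps)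
    moreover have "frobenius3 a (b - 1) c
        = fact K * delta3 (real a + 2) (real b) (real c) / (fact (a + 2) * fact (b - 1 + 1) * fact c)"
    proof -
      have "a + (b - 1) + c = K" "real (b - 1) + 1 = real b" using True by (simp_all add: K_def of_nat_diff)
      then show ?thesis unfolding frobenius3_def by (simp only:)
    qed
    ultimately show ?thesis using True by simp
  qed (use cb in \<open>simp add: delta3_def\<close>)
  have term_c: "(if 0 < c then frobenius3 a b (c - 1) else 0)
      = real c * (fact K * delta3 (real a + 2) (real b + 1) (real c - 1)) / H"
  proof (cases "0 < c")
    case True
    have "H = real c * (fact (a + 2) * fact (b + 1) * fact (c - 1))"
      using True by (simp add: H_def fact_reduce algebra_simps)
    moreover have "frobenius3 a b (c - 1)
        = fact K * delta3 (real a + 2) (real b + 1) (real c - 1) / (fact (a + 2) * fact (b + 1) * fact (c - 1))"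
    proof -
      have "a + b + (c - 1) = K" "real (c - 1) = real c - 1" using True by (simp_all add: K_def of_nat_diff)
      then show ?thesis unfolding frobenius3_def by (simp only:)
    qed
    ultimately show ?thesis using True by simp
  qed simp
  have "frobenius3 a b c = fact (Suc K) * delta3 (real a + 2) (real b + 1) (real c) / H"
    unfolding frobenius3_def N H_def ..
  also have "\<dots> = fact K * (real (Suc K) * delta3 (real a + 2) (real b + 1) (real c)) / H"
    by (simp only: fact_Suc mult_ac)
  also have "real (Suc K) * delta3 (real a + 2) (real b + 1) (real c)
      = (real a + 2) * delta3 (real a + 1) (real b + 1) (real c) + (real b + 1) * delta3 (real a + 2) (real b) (real c)
        + real c * delta3 (real a + 2) (real b + 1) (real c - 1)"
    using delta3_rec[of "real a + 2" "real b + 1" "real c"] N[symmetric] by (simp add: algebra_simps)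
  finally show ?thesis
    unfolding term_a term_b term_c by (simp add: add_divide_distrib algebra_simps)
qed

lemma count_syt3_empty: "count_syt3 0 0 0 = 1"
proof -
  have "shape3 0 0 0 = {}" by (simp add: shape3_def)
  moreover have "syt_on {} 0 = {\<lambda>_. 0}" by (auto simp: syt_on_def bij_betw_def)
  ultimately show ?thesis by (simp add: count_syt3_def)
qed

lemma count_syt3_eq_frobenius3:
  assumes "c \<le> b" "b \<le> a"
  shows "real (count_syt3 a b c) = frobenius3 a b c"
  using assms
proof (induction "a + b + c" arbitrary: a b c)
  case 0
  then show ?case by (simp add: count_syt3_empty frobenius3_def delta3_def)
next
  case (Suc K)
  note IH = Suc.hyps(1) and N = Suc.hyps(2) and cb = Suc.prems(1) and ba = Suc.prems(2)
  have a: "0 < a" using N cb ba by simp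
  have "real (if b < a then count_syt3 (a - 1) b c else 0) = (if b < a then frobenius3 (a - 1) b c else 0)"
    using IH[of "a - 1" b c] N cb by simp
  moreover have "real (if c < b then count_syt3 a (b - 1) c else 0) = (if c < b then frobenius3 a (b - 1) c else 0)"
    using IH[of a "b - 1" c] N ba by simp
  moreover have "real (if 0 < c then count_syt3 a b (c - 1) else 0) = (if 0 < c then frobenius3 a b (c - 1) else 0)"
    using IH[of a b "c - 1"] N ba cb by simp
  ultimately show ?case
    unfolding count_syt3_rec[OF cb ba a] frobenius3_rec[OF cb ba a] by (simp only: of_nat_add)
qed

section \<open>Three-row rectangles\<close>

lemma cells_eq_shape3: "cells k = shape3 k k k"
  unfolding cells_def shape3_def by auto

lemma card_syt_cells:
  "real (card (syt_on (cells k) (3 * k))) = 2 * fact (3 * k) / (fact (k + 2) * fact (k + 1) * fact k)"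
proof -
  have k: "3 * k = k + k + k" by simp
  show ?thesis
    unfolding k using count_syt3_eq_frobenius3[of k k k]
    by (simp add: count_syt3_def cells_eq_shape3 frobenius3_def delta3_def)
qed

lemma syt_cells_mono:
  assumes T: "T \<in> syt_on (cells n) N" and "(i, j) \<in> cells n" "(i', j') \<in> cells n" "i \<le> i'" "j \<le> j'"
  shows "T (i, j) \<le> T (i', j')"
proof -
  have mid: "(i, j') \<in> cells n" using assms(2,3) unfolding cells_def by auto
  have "T (i, j) \<le> T (i, j')"
    using syt_on_row_less[OF T assms(2) mid] \<open>j \<le> j'\<close> by (cases "j = j'") auto
  also have "\<dots> \<le> T (i', j')"
    using syt_on_col_less[OF T mid assms(3)] \<open>i \<le> i'\<close> by (cases "i = i'") auto
  finally show ?thesis .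
qed

lemma cells_split:
  assumes "p \<le> n"
  shows "cells n = cells p \<union> (\<lambda>(i, j). (i, j + p)) ` cells (n - p)"
    and "cells p \<inter> (\<lambda>(i, j). (i, j + p)) ` cells (n - p) = {}"
    and "rowcol_before (cells p) ((\<lambda>(i, j). (i, j + p)) ` cells (n - p))"
proof -
  define R where "R = (\<lambda>(i, j). (i, j + p)) ` cells (n - p)"
  have shifted: "(i, j) \<in> R \<longleftrightarrow> i \<in> {1..3} \<and> p < j \<and> j \<le> n" for i j
    unfolding R_def mem_shift_cols_iff cells_def using assms by auto
  show "cells n = cells p \<union> (\<lambda>(i, j). (i, j + p)) ` cells (n - p)"
    unfolding R_def[symmetric] using assms by (auto simp: shifted cells_def)
  show "cells p \<inter> (\<lambda>(i, j). (i, j + p)) ` cells (n - p) = {}"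
    unfolding R_def[symmetric] by (auto simp: shifted cells_def)
  show "rowcol_before (cells p) ((\<lambda>(i, j). (i, j + p)) ` cells (n - p))"
    unfolding R_def[symmetric] rowcol_before_def by (auto simp: shifted cells_def)
qed

lemma syt_cells_entry_iff:
  assumes T: "T \<in> syt_on (cells n) (3 * n)" and p: "p < n"
  shows "T (1, p + 1) = 3 * p + 1 \<longleftrightarrow> T ` cells p = {1..3 * p}"
proof -
  define R where "R = (\<lambda>(i, j). (i, j + p)) ` cells (n - p)"
  have n: "cells n = cells p \<union> R" and disj: "cells p \<inter> R = {}"
    using cells_split[of p n] p by (simp_all add: R_def)
  have T': "T \<in> syt_on (cells p \<union> R) (3 * p + 3 * (n - p))"
    using T p n by (simp add: algebra_simps)
  have R_iff: "(i, j) \<in> R \<longleftrightarrow> i \<in> {1..3} \<and> p < j \<and> j \<le> n" for i j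
    unfolding R_def mem_shift_cols_iff cells_def using p by auto
  have corner: "(1, p + 1) \<in> R" using p by (simp add: R_iff)
  have min_R: "T (1, p + 1) \<le> T u" if "u \<in> R" for u
  proof -
    obtain i j where u: "u = (i, j)" by (cases u)
    have "(i, j) \<in> cells n" "(1, p + 1) \<in> cells n" "1 \<le> i" "p + 1 \<le> j"
      using that corner n u by (auto simp: R_iff)
    then show ?thesis using syt_cells_mono[OF T] u by blast
  qed
  have inj_R: "inj_on T R" using syt_on_inj_on[OF T] n by (simp add: inj_on_Un)
  have card_R: "card R = 3 * (n - p)"
    unfolding R_def by (simp add: card_image inj_on_def cells_def card_cartesian_product)
  show ?thesis
  proof
    assume entry: "T (1, p + 1) = 3 * p + 1"
    have "T ` R \<subseteq> {3 * p + 1..3 * n}"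
      using min_R syt_on_range[OF T] n entry by fastforce
    moreover have "card (T ` R) = card {3 * p + 1..3 * n}"
      using card_image[OF inj_R] card_R p by simp
    ultimately have TR: "T ` R = {3 * p + 1..3 * n}"
      by (intro card_subset_eq) simp_all
    have "T ` cells p = T ` cells n - T ` R"
      using inj_on_image_set_diff[OF syt_on_inj_on[OF T], of "cells n" R] n disj
      by (simp add: Un_Diff Diff_triv)
    then show "T ` cells p = {1..3 * p}"
      unfolding syt_on_image[OF T] TR using p by auto
  next
    assume "T ` cells p = {1..3 * p}"
    then have TR: "T ` R = (\<lambda>v. v + 3 * p) ` {1..3 * (n - p)}"
      using syt_on_image_upper[OF T' disj] by blast
    have "3 * p + 1 \<le> T (1, p + 1)" using corner TR by force
    moreover have "3 * p + 1 \<in> T ` R" unfolding TR using p by (auto intro: image_eqI[of _ _ 1])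
    then obtain u where "u \<in> R" "3 * p + 1 = T u" by blast
    then have "T (1, p + 1) \<le> 3 * p + 1" using min_R by simp
    ultimately show "T (1, p + 1) = 3 * p + 1" by simp
  qed
qed

lemma card_syt_cells_entry:
  assumes p: "p < n"
  shows "card {T \<in> syt_on (cells n) (3 * n). T (1, p + 1) = 3 * p + 1}
       = card (syt_on (cells p) (3 * p)) * card (syt_on (cells (n - p)) (3 * (n - p)))"
proof -
  define R where "R = (\<lambda>(i, j). (i, j + p)) ` cells (n - p)"
  have n: "cells n = cells p \<union> R" and disj: "cells p \<inter> R = {}" and before: "rowcol_before (cells p) R"
    using cells_split[of p n] p by (simp_all add: R_def)
  have N: "3 * n = 3 * p + 3 * (n - p)" using p by simp
  have "{T \<in> syt_on (cells n) (3 * n). T (1, p + 1) = 3 * p + 1}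
      = {T \<in> syt_on (cells n) (3 * n). T ` cells p = {1..3 * p}}"
    using syt_cells_entry_iff[OF _ p] by blast
  also have "\<dots> = {T \<in> syt_on (cells p \<union> R) (3 * p + 3 * (n - p)). T ` cells p = {1..3 * p}}"
    by (simp only: n[symmetric] N[symmetric])
  also have "card \<dots> = card (syt_on (cells p) (3 * p)) * card (syt_on R (3 * (n - p)))"
    by (rule card_syt_on_split[OF disj before])
  also have "card (syt_on R (3 * (n - p))) = card (syt_on (cells (n - p)) (3 * (n - p)))"
    unfolding R_def by (rule card_syt_on_shift_cols)
  finally show ?thesis .
qed

lemma card_syt_cells_2: "card (syt_on (cells 2) 6) = 5"
proof -
  have "real (card (syt_on (cells 2) 6)) = 5"
    using card_syt_cells[of 2] by (simp add: fact_numeral)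
  then show ?thesis by simp
qed

lemma fact_add_2: "fact (k + 2) = (real k + 2) * (real k + 1) * fact k"
  by (simp add: fact_Suc numeral_2_eq_2 algebra_simps)

lemma syt_cells_ratio:
  assumes "2 \<le> n"
  shows "5 * real (card (syt_on (cells (n - 2)) (3 * (n - 2)))) / real (card (syt_on (cells n) (3 * n)))
       = (5 * real n * (real n + 1)^2 * (real n + 2)) /
         (9 * (3 * real n - 1) * (3 * real n - 2) * (3 * real n - 4) * (3 * real n - 5))"
proof -
  obtain m where n: "n = m + 2" using assms by (metis add.commute le_iff_add)
  define x where "x = real m"
  define F :: real where "F = fact (m + 2) * fact (m + 1) * fact m"
  define X :: real where "X = fact (3 * m)"
  define P where "P = (x + 4) * (x + 3) * (x + 3) * (x + 2) * (x + 2) * (x + 1)"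
  define Q where "Q = (3 * x + 6) * (3 * x + 5) * (3 * x + 4) * (3 * x + 3) * (3 * x + 2) * (3 * x + 1)"
  have pos: "0 < F" "0 < X" "0 < P" "0 < Q" by (simp_all add: F_def X_def P_def Q_def x_def)
  have small: "real (card (syt_on (cells m) (3 * m))) = 2 * X / F"
    using card_syt_cells[of m] by (simp add: F_def X_def)
  have "fact (m + 2 + 2) * fact (m + 2 + 1) * fact (m + 2) = P * F"
    using fact_add_2[of "m + 2"] fact_add_2[of "m + 1"] fact_add_2[of m]
    by (simp add: P_def F_def x_def algebra_simps)
  moreover have "fact (3 * (m + 2)) = Q * X"
  proof -
    have "3 * (m + 2) = 3 * m + 2 + 2 + 2" by simp
    then have "fact (3 * (m + 2)) = (fact (3 * m + 2 + 2 + 2) :: real)" by (simp only:)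
    also have "\<dots> = Q * X" unfolding fact_add_2 by (simp add: Q_def X_def x_def algebra_simps)
    finally show ?thesis .
  qed
  ultimately have large: "real (card (syt_on (cells n) (3 * n))) = 2 * Q * X / (P * F)"
    using card_syt_cells[of "m + 2"] n by (simp add: mult.assoc)
  have "5 * real (card (syt_on (cells (n - 2)) (3 * (n - 2)))) / real (card (syt_on (cells n) (3 * n)))
      = 5 * (2 * X / F) / (2 * Q * X / (P * F))"
  proof -
    have "n - 2 = m" using n by simp
    then show ?thesis by (simp only: small large)
  qed
  also have "\<dots> = 5 * P / Q" using pos by (simp add: field_simps)
  also have "\<dots> = 5 * (x + 2) * (x + 3)^2 * (x + 4) / (9 * (3 * x + 5) * (3 * x + 4) * (3 * x + 2) * (3 * x + 1))"
  proof -
    have "5 * P * (9 * (3 * x + 5) * (3 * x + 4) * (3 * x + 2) * (3 * x + 1))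
        = 5 * (x + 2) * (x + 3)^2 * (x + 4) * Q"
      by (simp add: P_def Q_def power2_eq_square algebra_simps)
    moreover have "9 * (3 * x + 5) * (3 * x + 4) * (3 * x + 2) * (3 * x + 1) \<noteq> 0"
      by (simp add: x_def)
    ultimately show ?thesis using pos by (simp add: frac_eq_eq)
  qed
  also have "\<dots> = (5 * real n * (real n + 1)^2 * (real n + 2)) /
         (9 * (3 * real n - 1) * (3 * real n - 2) * (3 * real n - 4) * (3 * real n - 5))"
  proof -
    have "real n = x + 2" by (simp add: n x_def)
    then show ?thesis by (simp add: algebra_simps)
  qed
  finally show ?thesis .
qed

theorem mainTheorem6:
  fixes n :: nat
  assumes "n \<ge> 3"
  shows "measure_pmf.prob (pmf_of_set (syt n)) {T. T (1,3) = 7}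
       = (5 * real n * (real n + 1)^2 * (real n + 2)) /
         (9 * (3 * real n - 1) * (3 * real n - 2) * (3 * real n - 4) * (3 * real n - 5))"
proof -
  have fin: "finite (syt n)"
    unfolding syt_eq_syt_on cells_def by (rule finite_syt_on) simp
  have "real (card (syt n)) \<noteq> 0"
    using card_syt_cells[of n] by (simp add: syt_eq_syt_on)
  then have ne: "syt n \<noteq> {}" by auto
  have "card (syt n \<inter> {T. T (1, 3) = 7}) = 5 * card (syt_on (cells (n - 2)) (3 * (n - 2)))"
    using card_syt_cells_entry[of 2 n] assms
    by (simp add: syt_eq_syt_on Collect_conj_eq Int_commute card_syt_cells_2)
  then have "measure_pmf.prob (pmf_of_set (syt n)) {T. T (1,3) = 7}
      = 5 * real (card (syt_on (cells (n - 2)) (3 * (n - 2)))) / real (card (syt_on (cells n) (3 * n)))"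
    using measure_pmf_of_set[OF ne fin] by (simp add: syt_eq_syt_on)
  also have "\<dots> = (5 * real n * (real n + 1)^2 * (real n + 2)) /
         (9 * (3 * real n - 1) * (3 * real n - 2) * (3 * real n - 4) * (3 * real n - 5))"
    using assms by (intro syt_cells_ratio) simp
  finally show ?thesis .
qed

end
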